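(* Let $\mathcal Z,\mathcal S$ be finite, $f:\mathcal Z\times\mathcal S\to\mathbb R$, and $(Z_i,S_i)$, $i=1,\dots,n$, random variables with a common joint law $P_{ZS}$ (not depending on $i$) such that $\Pr[\mathbf S=\mathbf s\mid\mathbf Z=\mathbf z]=\prod_{i=1}^n\Pr[S_i=s_i\mid Z_i=z_i]$. Let $P_{S|Z}$ be the conditional of $P_{ZS}$. Then for every type $p$ with $\Pr[\hat p_{\mathbf Z}=p]>0$, $$\operatorname{Var}\Big[\sum_{i=1}^n f(Z_i,S_i)\ \Big|\ \hat p_{\mathbf Z}=p\Big]=n\,\mathbb E_{p}\Big[\operatorname{Var}_{P_{S|Z}}[f(\tilde Z,S)\mid\tilde Z]\Big],$$ where $\tilde Z\sim p$ and, given $\tilde Z$, $S\sim P_{S|Z}(\cdot|\tilde Z)$.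
   Context: $\mathbf Z=(Z_1,\dots,Z_n)$, $\mathbf S=(S_1,\dots,S_n)$; $\hat p_{\mathbf Z}$ is the empirical distribution (type) of $\mathbf Z$. *)

theory Defs
  imports "HOL-Probability.Probability"
begin

definition emp_type :: "'z list \<Rightarrow> 'z \<Rightarrow> real" where
  "emp_type zs a = real (length (filter (\<lambda>x. x = a) zs)) / real (length zs)"

definition cond_S_given_Z :: "('z \<times> 's) pmf \<Rightarrow> 'z \<Rightarrow> 's pmf" where
  "cond_S_given_Z P a = map_pmf snd (cond_pmf P {x. fst x = a})"

end

theory Submission
  imports Defs
begin

text \<open>Conditionally on \<open>Z = zs\<close> the \<open>S\<^sub>i\<close> are independent with laws \<open>P_{S|Z}(. | z\<^sub>i)\<close>, so
  \<open>\<Sum>\<^sub>i f(z\<^sub>i, S\<^sub>i)\<close> has mean \<open>\<Sum>\<^sub>i m(z\<^sub>i)\<close> and variance \<open>\<Sum>\<^sub>i v(z\<^sub>i)\<close>, where \<open>m(a)\<close> and \<open>v(a)\<close> are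
  the mean and variance of \<open>f(a, S)\<close> under \<open>P_{S|Z}(. | a)\<close>. These sums depend on \<open>zs\<close> only
  through its type, so on the event that the type is \<open>p\<close> they are the constants \<open>n E\<^sub>p m\<close> and
  \<open>n E\<^sub>p v\<close>. As the conditional mean is constant on that event, the law of total variance has
  no between-groups term, and the variance given the type is \<open>n E\<^sub>p v\<close>.\<close>

lemma finite_lists_length: "finite {xs :: 'a::finite list. length xs = n}"
  using finite_lists_length_eq[of "UNIV :: 'a set" n] by simp

lemma sum_lists_length_Suc:
  "(\<Sum>xs | length xs = Suc n. G xs) = (\<Sum>x\<in>UNIV. \<Sum>xs | length xs = n. G (x # xs :: 'a::finite list))"
proof -
  have "(\<Sum>xs | length xs = Suc n. G xs) = (\<Sum>(x, xs) \<in> UNIV \<times> {xs. length xs = n}. G (x # xs))"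
    by (rule sum.reindex_bij_witness[of _ "\<lambda>(x, xs). x # xs" "\<lambda>xs. (hd xs, tl xs)"])
      (auto simp: length_Suc_conv)
  then show ?thesis
    by (simp add: sum.cartesian_product finite_lists_length)
qed

lemma sum_lists_length_zip:
  "(\<Sum>xs | length xs = n. G xs)
     = (\<Sum>zs | length zs = n. \<Sum>ss | length ss = n. G (zip zs ss :: ('a::finite \<times> 'b::finite) list))"
proof -
  have "(\<Sum>xs | length xs = n. G xs)
      = (\<Sum>(zs, ss) \<in> {zs. length zs = n} \<times> {ss. length ss = n}. G (zip zs ss))"
    by (rule sum.reindex_bij_witness[of _ "\<lambda>(zs, ss). zip zs ss" "\<lambda>xs. (map fst xs, map snd xs)"])
      (auto simp: zip_map_fst_snd)
  then show ?thesis
    by (simp add: sum.cartesian_product finite_lists_length)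
qed

text \<open>The expectation of \<open>F\<close> under the product of the laws \<open>D z\<^sub>i\<close>, written as a finite sum so
  that linearity holds without integrability side conditions.\<close>

definition indep_expectation :: "('z \<Rightarrow> 's pmf) \<Rightarrow> 'z list \<Rightarrow> ('s list \<Rightarrow> real) \<Rightarrow> real" where
  "indep_expectation D zs F =
     (\<Sum>ss | length ss = length zs. prod_list (map2 (\<lambda>z s. pmf (D z) s) zs ss) * F ss)"

lemma indep_expectation_Nil [simp]: "indep_expectation D [] F = F []"
  by (simp add: indep_expectation_def)

lemma indep_expectation_Cons:
  "indep_expectation D (z # zs) F
     = (\<Sum>s\<in>UNIV. pmf (D z) s * indep_expectation D zs (\<lambda>ss. F (s # ss :: 's::finite list)))"
  by (simp add: indep_expectation_def sum_lists_length_Suc sum_distrib_left mult.assoc)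

lemma indep_expectation_cong:
  "(\<And>ss. length ss = length zs \<Longrightarrow> F ss = G ss) \<Longrightarrow> indep_expectation D zs F = indep_expectation D zs G"
  by (simp add: indep_expectation_def)

lemma indep_expectation_add [simp]:
  "indep_expectation D zs (\<lambda>ss. F ss + G ss) = indep_expectation D zs F + indep_expectation D zs G"
  by (simp add: indep_expectation_def sum.distrib distrib_left)

lemma indep_expectation_diff [simp]:
  "indep_expectation D zs (\<lambda>ss. F ss - G ss) = indep_expectation D zs F - indep_expectation D zs G"
  by (simp add: indep_expectation_def sum_subtractf right_diff_distrib)

lemma indep_expectation_cmult [simp]:
  "indep_expectation D zs (\<lambda>ss. c * F ss) = c * indep_expectation D zs F"
  by (simp add: indep_expectation_def sum_distrib_left mult.left_commute)

lemma indep_expectation_const [simp]: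
  "indep_expectation D zs (\<lambda>_. c) = (c :: real)" for D :: "'z \<Rightarrow> 's::finite pmf"
  by (induction zs arbitrary: c) (simp_all add: indep_expectation_Cons sum_pmf_eq_1 flip: sum_distrib_right)

lemma expectation_finite_pmf:
  "measure_pmf.expectation P g = (\<Sum>s\<in>UNIV. pmf P s * g s)" for P :: "'s::finite pmf"
  by (simp add: integral_measure_pmf_real[of UNIV] mult.commute)

lemma indep_expectation_sum_list:
  fixes D :: "'z \<Rightarrow> 's::finite pmf"
  shows "indep_expectation D zs (\<lambda>ss. sum_list (map2 g zs ss))
           = sum_list (map (\<lambda>z. measure_pmf.expectation (D z) (g z)) zs)"
proof (induction zs)
  case (Cons z zs)
  then show ?case
    by (simp add: indep_expectation_Cons expectation_finite_pmf distrib_left sum.distrib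
        sum_pmf_eq_1 flip: sum_distrib_right)
qed simp

lemma indep_expectation_sum_list_variance:
  fixes D :: "'z \<Rightarrow> 's::finite pmf"
  shows "indep_expectation D zs
           (\<lambda>ss. (sum_list (map2 g zs ss) - sum_list (map (\<lambda>z. measure_pmf.expectation (D z) (g z)) zs))\<^sup>2)
         = sum_list (map (\<lambda>z. measure_pmf.variance (D z) (g z)) zs)"
proof (induction zs)
  case (Cons z zs)
  define \<mu> where "\<mu> = (\<lambda>z. measure_pmf.expectation (D z) (g z))"
  define R where "R ss = sum_list (map2 g zs ss) - sum_list (map \<mu> zs)" for ss
  have "indep_expectation D zs R = 0"
    unfolding R_def[abs_def] \<mu>_def by (simp add: indep_expectation_sum_list)
  then have R_sq: "indep_expectation D zs (\<lambda>ss. (g z s - \<mu> z + R ss)\<^sup>2)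
      = (g z s - \<mu> z)\<^sup>2 + indep_expectation D zs (\<lambda>ss. (R ss)\<^sup>2)" for s
    by (simp add: power2_sum)
  have "indep_expectation D (z # zs) (\<lambda>ss. (sum_list (map2 g (z # zs) ss) - sum_list (map \<mu> (z # zs)))\<^sup>2)
      = (\<Sum>s\<in>UNIV. pmf (D z) s * indep_expectation D zs (\<lambda>ss. (g z s - \<mu> z + R ss)\<^sup>2))"
    by (simp add: indep_expectation_Cons R_def algebra_simps)
  also have "\<dots> = measure_pmf.variance (D z) (g z) + indep_expectation D zs (\<lambda>ss. (R ss)\<^sup>2)"
    unfolding R_sq by (simp add: expectation_finite_pmf \<mu>_def distrib_left sum.distrib sum_pmf_eq_1
        flip: sum_distrib_right)
  finally show ?case
    using Cons.IH by (simp add: R_def \<mu>_def)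
qed simp

definition snd_indep_given_fst :: "('z \<times> 's) list pmf \<Rightarrow> nat \<Rightarrow> ('z \<Rightarrow> 's pmf) \<Rightarrow> bool" where
  "snd_indep_given_fst M n D \<longleftrightarrow> (\<forall>zs ss. length zs = n \<longrightarrow> length ss = n \<longrightarrow>
     pmf M (zip zs ss) = measure M {xs. map fst xs = zs} * prod_list (map2 (\<lambda>z s. pmf (D z) s) zs ss))"

lemma pmf_cond_S_given_Z:
  fixes P :: "('z::finite \<times> 's::finite) pmf"
  assumes "measure P {x. fst x = a} > 0"
  shows "pmf (cond_S_given_Z P a) s = pmf P (a, s) / measure P {x. fst x = a}"
proof -
  let ?B = "{x. fst x = a}"
  have ne: "set_pmf P \<inter> ?B \<noteq> {}"
    using assms measure_pmf_zero_iff[of P ?B] by auto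
  have "pmf (cond_S_given_Z P a) s = (\<Sum>x \<in> snd -` {s}. pmf (cond_pmf P ?B) x)"
    unfolding cond_S_given_Z_def by (simp add: pmf_map measure_measure_pmf_finite)
  also have "\<dots> = (\<Sum>x \<in> snd -` {s} \<inter> ?B. pmf P x / measure P ?B)"
    by (simp add: pmf_cond[OF ne] sum.inter_restrict)
  also have "snd -` {s} \<inter> ?B = {(a, s)}"
    by auto
  finally show ?thesis
    by simp
qed

lemma nth_prob_ratio_eq_cond_S_given_Z:
  fixes M :: "('z::finite \<times> 's::finite) list pmf"
  assumes law: "map_pmf (\<lambda>xs. xs ! i) M = P"
    and pos: "measure M {xs. fst (xs ! i) = a} > 0"
  shows "measure M {xs. xs ! i = (a, s)} / measure M {xs. fst (xs ! i) = a} = pmf (cond_S_given_Z P a) s"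
proof -
  have "measure M {xs. xs ! i = (a, s)} = pmf P (a, s)"
    and "measure M {xs. fst (xs ! i) = a} = measure P {x. fst x = a}"
    by (simp_all add: law[symmetric] pmf_map vimage_def)
  with pos show ?thesis
    by (simp add: pmf_cond_S_given_Z)
qed

lemma prod_lessThan_nth_eq_prod_list_map2:
  "length ss = length zs \<Longrightarrow> (\<Prod>i<length zs. Q (zs ! i) (ss ! i)) = prod_list (map2 Q zs ss)"
proof (induction zs arbitrary: ss)
  case (Cons z zs)
  then show ?case
    by (cases ss) (simp_all add: prod.lessThan_Suc_shift del: prod.lessThan_Suc)
qed simp

lemma pmf_zip_div_prob_fst_eq_prod_cond:
  fixes M :: "('z::finite \<times> 's::finite) list pmf"
  assumes common_law: "\<forall>i<n. map_pmf (\<lambda>xs. xs ! i) M = PZS"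
    and cond_indep: "\<forall>zs ss. length zs = n \<longrightarrow> length ss = n \<longrightarrow>
        measure_pmf.prob M {xs. map fst xs = zs} > 0 \<longrightarrow>
        measure_pmf.prob M {xs. map snd xs = ss \<and> map fst xs = zs}
          / measure_pmf.prob M {xs. map fst xs = zs}
        = (\<Prod>i<n. measure_pmf.prob M {xs. xs ! i = (zs ! i, ss ! i)}
                    / measure_pmf.prob M {xs. fst (xs ! i) = zs ! i})"
    and zs: "length zs = n" and ss: "length ss = n"
    and PZ_pos: "measure M {xs. map fst xs = zs} > 0"
  shows "pmf M (zip zs ss) / measure M {xs. map fst xs = zs}
           = prod_list (map2 (\<lambda>z s. pmf (cond_S_given_Z PZS z) s) zs ss)"
proof -
  let ?PZ = "measure M {xs. map fst xs = zs}"
  have "{xs. map snd xs = ss \<and> map fst xs = zs} = {zip zs ss}"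
    using zs ss by (auto simp: zip_map_fst_snd[symmetric])
  moreover have "measure M {xs. map snd xs = ss \<and> map fst xs = zs} / ?PZ
      = (\<Prod>i<n. measure M {xs. xs ! i = (zs ! i, ss ! i)} / measure M {xs. fst (xs ! i) = zs ! i})"
    using cond_indep zs ss PZ_pos by blast
  ultimately have "pmf M (zip zs ss) / ?PZ
      = (\<Prod>i<n. measure M {xs. xs ! i = (zs ! i, ss ! i)} / measure M {xs. fst (xs ! i) = zs ! i})"
    by (simp add: measure_pmf_single)
  also have "\<dots> = (\<Prod>i<n. pmf (cond_S_given_Z PZS (zs ! i)) (ss ! i))"
  proof (intro prod.cong refl)
    fix i assume "i \<in> {..<n}"
    moreover have "?PZ \<le> measure M {xs. fst (xs ! i) = zs ! i}"
      using \<open>i \<in> {..<n}\<close> zs by (intro measure_pmf.finite_measure_mono) auto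
    ultimately show "measure M {xs. xs ! i = (zs ! i, ss ! i)} / measure M {xs. fst (xs ! i) = zs ! i}
        = pmf (cond_S_given_Z PZS (zs ! i)) (ss ! i)"
      using common_law PZ_pos by (intro nth_prob_ratio_eq_cond_S_given_Z) auto
  qed
  also have "\<dots> = prod_list (map2 (\<lambda>z s. pmf (cond_S_given_Z PZS z) s) zs ss)"
    using prod_lessThan_nth_eq_prod_list_map2[of ss zs] zs ss by simp
  finally show ?thesis .
qed

lemma snd_indep_given_fst_cond_S_given_Z:
  fixes M :: "('z::finite \<times> 's::finite) list pmf"
  assumes common_law: "\<forall>i<n. map_pmf (\<lambda>xs. xs ! i) M = PZS"
    and cond_indep: "\<forall>zs ss. length zs = n \<longrightarrow> length ss = n \<longrightarrow>
        measure_pmf.prob M {xs. map fst xs = zs} > 0 \<longrightarrow>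
        measure_pmf.prob M {xs. map snd xs = ss \<and> map fst xs = zs}
          / measure_pmf.prob M {xs. map fst xs = zs}
        = (\<Prod>i<n. measure_pmf.prob M {xs. xs ! i = (zs ! i, ss ! i)}
                    / measure_pmf.prob M {xs. fst (xs ! i) = zs ! i})"
  shows "snd_indep_given_fst M n (cond_S_given_Z PZS)"
  unfolding snd_indep_given_fst_def
proof (intro allI impI)
  fix zs :: "'z list" and ss :: "'s list"
  assume zs: "length zs = n" and ss: "length ss = n"
  let ?PZ = "measure M {xs. map fst xs = zs}"
  have "pmf M (zip zs ss) \<le> ?PZ"
    unfolding measure_pmf_single[symmetric] using zs ss
    by (intro measure_pmf.finite_measure_mono) auto
  then show "pmf M (zip zs ss) = ?PZ * prod_list (map2 (\<lambda>z s. pmf (cond_S_given_Z PZS z) s) zs ss)"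
    using pmf_zip_div_prob_fst_eq_prod_cond[OF common_law cond_indep zs ss] pmf_nonneg[of M "zip zs ss"]
    by (cases "?PZ = 0") (auto simp: zero_less_measure_iff field_simps)
qed

lemma expectation_cond_pmf_finite_support:
  assumes "finite L" "set_pmf M \<subseteq> L" "measure M A \<noteq> 0"
  shows "measure_pmf.expectation (cond_pmf M A) F
           = (\<Sum>x\<in>L. if x \<in> A then pmf M x * F x else 0) / measure M A"
proof -
  have ne: "set_pmf M \<inter> A \<noteq> {}"
    using assms(3) measure_pmf_zero_iff[of M A] by auto
  have "measure_pmf.expectation (cond_pmf M A) F = (\<Sum>x\<in>L. F x * pmf (cond_pmf M A) x)"
    using assms(1,2) ne by (intro integral_measure_pmf_real) auto
  then show ?thesis
    unfolding sum_divide_distrib by (auto simp: pmf_cond[OF ne] intro!: sum.cong)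
qed

lemma sum_pmf_restrict_fst_eq_indep_expectation:
  fixes M :: "('z::finite \<times> 's::finite) list pmf"
  assumes "snd_indep_given_fst M n D"
  shows "(\<Sum>xs | length xs = n. if Q (map fst xs) then pmf M xs * F xs else 0)
           = (\<Sum>zs | length zs = n. if Q zs
                then measure M {xs. map fst xs = zs} * indep_expectation D zs (\<lambda>ss. F (zip zs ss)) else 0)"
  unfolding sum_lists_length_zip
proof (intro sum.cong refl)
  fix zs :: "'z list" assume "zs \<in> {zs. length zs = n}"
  then show "(\<Sum>ss | length ss = n. if Q (map fst (zip zs ss)) then pmf M (zip zs ss) * F (zip zs ss) else 0)
      = (if Q zs then measure M {xs. map fst xs = zs} * indep_expectation D zs (\<lambda>ss. F (zip zs ss)) else 0)"
    using assms by (simp add: snd_indep_given_fst_def indep_expectation_def sum_distrib_left mult.assoc)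
qed

lemma expectation_cond_fst_eq_const:
  fixes M :: "('z::finite \<times> 's::finite) list pmf"
  assumes len: "\<forall>xs\<in>set_pmf M. length xs = n"
    and indep: "snd_indep_given_fst M n D"
    and pos: "measure M {xs. Q (map fst xs)} > 0"
    and const: "\<And>zs. length zs = n \<Longrightarrow> Q zs \<Longrightarrow> measure M {xs. map fst xs = zs} > 0 \<Longrightarrow>
      indep_expectation D zs (\<lambda>ss. F (zip zs ss)) = K"
  shows "measure_pmf.expectation (cond_pmf M {xs. Q (map fst xs)}) F = K"
proof -
  let ?A = "{xs. Q (map fst xs)}"
  let ?PZ = "\<lambda>zs. measure M {xs. map fst xs = zs}"
  \<comment> \<open>For \<open>G = 1\<close> this identifies the normalising constant \<open>measure M ?A\<close>.\<close>
  have expectation_eq: "measure_pmf.expectation (cond_pmf M ?A) G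
      = (\<Sum>zs | length zs = n. if Q zs then ?PZ zs * indep_expectation D zs (\<lambda>ss. G (zip zs ss)) else 0)
        / measure M ?A" for G
    using expectation_cond_pmf_finite_support[of "{xs. length xs = n}" M ?A G] len pos
      sum_pmf_restrict_fst_eq_indep_expectation[OF indep]
    by (auto simp: finite_lists_length)
  have "(\<Sum>zs | length zs = n. if Q zs then ?PZ zs * indep_expectation D zs (\<lambda>ss. F (zip zs ss)) else 0)
      = K * (\<Sum>zs | length zs = n. if Q zs then ?PZ zs * indep_expectation D zs (\<lambda>_. 1) else 0)"
    unfolding sum_distrib_left
  proof (intro sum.cong refl)
    fix zs :: "'z list" assume "zs \<in> {zs. length zs = n}"
    then show "(if Q zs then ?PZ zs * indep_expectation D zs (\<lambda>ss. F (zip zs ss)) else 0)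
        = K * (if Q zs then ?PZ zs * indep_expectation D zs (\<lambda>_. 1) else 0)"
      using const[of zs] by (cases "?PZ zs = 0") (auto simp: zero_less_measure_iff)
  qed
  then show ?thesis
    using expectation_eq[of F] expectation_eq[of "\<lambda>_. 1"] by simp
qed

lemma variance_cond_fst_eq_const:
  fixes M :: "('z::finite \<times> 's::finite) list pmf"
  assumes len: "\<forall>xs\<in>set_pmf M. length xs = n"
    and indep: "snd_indep_given_fst M n D"
    and pos: "measure M {xs. Q (map fst xs)} > 0"
    and mean: "\<And>zs. length zs = n \<Longrightarrow> Q zs \<Longrightarrow> indep_expectation D zs (\<lambda>ss. F (zip zs ss)) = c"
    and var: "\<And>zs. length zs = n \<Longrightarrow> Q zs \<Longrightarrow> indep_expectation D zs (\<lambda>ss. (F (zip zs ss) - c)\<^sup>2) = v"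
  shows "measure_pmf.variance (cond_pmf M {xs. Q (map fst xs)}) F = v"
proof -
  have "measure_pmf.expectation (cond_pmf M {xs. Q (map fst xs)}) F = c"
    using len indep pos by (rule expectation_cond_fst_eq_const) (simp_all add: mean)
  moreover have "measure_pmf.expectation (cond_pmf M {xs. Q (map fst xs)}) (\<lambda>xs. (F xs - c)\<^sup>2) = v"
    using len indep pos by (rule expectation_cond_fst_eq_const) (simp_all add: var)
  ultimately show ?thesis
    by simp
qed

lemma sum_list_map_eq_sum_count_list:
  "sum_list (map W zs) = (\<Sum>a\<in>UNIV. real (count_list zs a) * W a)" for zs :: "'z::finite list"
proof (induction zs)
  case (Cons z zs)
  have "(\<Sum>a\<in>UNIV. real (count_list (z # zs) a) * W a)
      = (\<Sum>a\<in>UNIV. (if z = a then W a else 0) + real (count_list zs a) * W a)"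
    by (intro sum.cong) (auto simp: algebra_simps)
  with Cons show ?case
    by (simp add: sum.distrib)
qed simp

lemma sum_list_map_eq_emp_type:
  fixes zs :: "'z::finite list"
  shows "sum_list (map W zs) = real (length zs) * (\<Sum>a\<in>UNIV. emp_type zs a * W a)"
proof (cases "zs = []")
  case False
  have "length (filter (\<lambda>x. x = a) zs) = count_list zs a" for a
    by (induction zs) auto
  then have "real (length zs) * emp_type zs a = real (count_list zs a)" for a
    using False by (simp add: emp_type_def)
  then show ?thesis
    by (simp add: sum_list_map_eq_sum_count_list sum_distrib_left flip: mult.assoc)
qed simp

lemma indep_expectation_sum_zip_nth:
  fixes D :: "'z::finite \<Rightarrow> 's::finite pmf"
  shows "indep_expectation D zs (\<lambda>ss. \<Sum>i<length zs. f (zip zs ss ! i))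
           = real (length zs) * (\<Sum>a\<in>UNIV. emp_type zs a * measure_pmf.expectation (D a) (\<lambda>s. f (a, s)))"
proof -
  have "indep_expectation D zs (\<lambda>ss. \<Sum>i<length zs. f (zip zs ss ! i))
      = indep_expectation D zs (\<lambda>ss. sum_list (map2 (\<lambda>z s. f (z, s)) zs ss))"
    by (rule indep_expectation_cong) (simp add: sum_list_sum_nth atLeast0LessThan case_prod_eta)
  also have "\<dots> = sum_list (map (\<lambda>a. measure_pmf.expectation (D a) (\<lambda>s. f (a, s))) zs)"
    by (rule indep_expectation_sum_list)
  finally show ?thesis
    by (simp add: sum_list_map_eq_emp_type)
qed

lemma indep_expectation_sum_zip_nth_variance:
  fixes D :: "'z::finite \<Rightarrow> 's::finite pmf"
  shows "indep_expectation D zs (\<lambda>ss. ((\<Sum>i<length zs. f (zip zs ss ! i))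
             - real (length zs) * (\<Sum>a\<in>UNIV. emp_type zs a * measure_pmf.expectation (D a) (\<lambda>s. f (a, s))))\<^sup>2)
           = real (length zs) * (\<Sum>a\<in>UNIV. emp_type zs a * measure_pmf.variance (D a) (\<lambda>s. f (a, s)))"
proof -
  let ?\<mu> = "\<lambda>a. measure_pmf.expectation (D a) (\<lambda>s. f (a, s))"
  have "real (length zs) * (\<Sum>a\<in>UNIV. emp_type zs a * ?\<mu> a) = sum_list (map ?\<mu> zs)"
    by (simp add: sum_list_map_eq_emp_type)
  then have "indep_expectation D zs (\<lambda>ss. ((\<Sum>i<length zs. f (zip zs ss ! i))
          - real (length zs) * (\<Sum>a\<in>UNIV. emp_type zs a * ?\<mu> a))\<^sup>2)
      = indep_expectation D zs (\<lambda>ss. (sum_list (map2 (\<lambda>z s. f (z, s)) zs ss) - sum_list (map ?\<mu> zs))\<^sup>2)"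
    by (intro indep_expectation_cong) (simp add: sum_list_sum_nth atLeast0LessThan case_prod_eta)
  also have "\<dots> = sum_list (map (\<lambda>a. measure_pmf.variance (D a) (\<lambda>s. f (a, s))) zs)"
    by (rule indep_expectation_sum_list_variance)
  finally show ?thesis
    by (simp add: sum_list_map_eq_emp_type)
qed

theorem corollary4:
  fixes M :: "(('z::finite) \<times> ('s::finite)) list pmf"
    and PZS :: "('z \<times> 's) pmf"
    and f :: "'z \<times> 's \<Rightarrow> real"
    and n :: nat
    and p :: "'z \<Rightarrow> real"
  assumes len: "\<forall>xs\<in>set_pmf M. length xs = n"
    and common_law: "\<forall>i<n. map_pmf (\<lambda>xs. xs ! i) M = PZS"
    and cond_indep: "\<forall>zs ss. length zs = n \<longrightarrow> length ss = n \<longrightarrow>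
        measure_pmf.prob M {xs. map fst xs = zs} > 0 \<longrightarrow>
        measure_pmf.prob M {xs. map snd xs = ss \<and> map fst xs = zs}
          / measure_pmf.prob M {xs. map fst xs = zs}
        = (\<Prod>i<n. measure_pmf.prob M {xs. xs ! i = (zs ! i, ss ! i)}
                    / measure_pmf.prob M {xs. fst (xs ! i) = zs ! i})"
    and pos: "measure_pmf.prob M {xs. emp_type (map fst xs) = p} > 0"
  shows "measure_pmf.variance (cond_pmf M {xs. emp_type (map fst xs) = p})
           (\<lambda>xs. \<Sum>i<n. f (xs ! i))
         = real n * (\<Sum>a\<in>UNIV. p a *
             measure_pmf.variance (cond_S_given_Z PZS a) (\<lambda>s. f (a, s)))"
proof -
  define D where "D = cond_S_given_Z PZS"
  define c where "c = real n * (\<Sum>a\<in>UNIV. p a * measure_pmf.expectation (D a) (\<lambda>s. f (a, s)))"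
  have indep: "snd_indep_given_fst M n D"
    unfolding D_def using common_law cond_indep by (rule snd_indep_given_fst_cond_S_given_Z)
  have mean: "indep_expectation D zs (\<lambda>ss. \<Sum>i<n. f (zip zs ss ! i)) = c"
    if "length zs = n" "emp_type zs = p" for zs
    using indep_expectation_sum_zip_nth[of D zs f] that by (simp add: c_def)
  have var: "indep_expectation D zs (\<lambda>ss. ((\<Sum>i<n. f (zip zs ss ! i)) - c)\<^sup>2)
      = real n * (\<Sum>a\<in>UNIV. p a * measure_pmf.variance (D a) (\<lambda>s. f (a, s)))"
    if "length zs = n" "emp_type zs = p" for zs
    using indep_expectation_sum_zip_nth_variance[of D zs f] that by (simp add: c_def)
  show ?thesis
    using len indep pos mean var unfolding D_def by (rule variance_cond_fst_eq_const)
qed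

end
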